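(* Let $T=\begin{pmatrix}1&1\\0&1\end{pmatrix}\in\mathsf{SL}(2,\mathbb{Z})$. Then $$T^{12}=\begin{pmatrix}1&12\\0&1\end{pmatrix}=\left[\begin{pmatrix}1&1\\1&2\end{pmatrix},\begin{pmatrix}3&1\\-1&0\end{pmatrix}\right]^2,$$ so $T^{12}$ is a product of two commutators of elements of $\mathsf{SL}(2,\mathbb{Z})$; moreover there do not exist $X,Y\in\mathsf{SL}(2,\mathbb{Z})$ with $[X,Y]=T^{12}$. Hence the commutator length of $T^{12}$ in $\mathsf{SL}(2,\mathbb{Z})$ equals $2$.
   Context: $[X,Y]=XYX^{-1}Y^{-1}$. The commutator length of an element of $[\mathsf{SL}(2,\mathbb{Z}),\mathsf{SL}(2,\mathbb{Z})]$ is the least number of commutators of elements of $\mathsf{SL}(2,\mathbb{Z})$ whose product is that element. *)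

theory Defs
  imports "HOL-Analysis.Analysis"
begin

definition SL2Z :: "(int^2^2) set" where
  "SL2Z = {A. det A = 1}"

definition mat2 :: "int \<Rightarrow> int \<Rightarrow> int \<Rightarrow> int \<Rightarrow> int^2^2" where
  "mat2 a b c d = vector [vector [a, b], vector [c, d]]"

definition commutator :: "int^2^2 \<Rightarrow> int^2^2 \<Rightarrow> int^2^2" where
  "commutator X Y = X ** Y ** matrix_inv X ** matrix_inv Y"

definition mat_prod_list :: "(int^2^2) list \<Rightarrow> int^2^2" where
  "mat_prod_list xs = foldr (**) xs (mat 1)"

definition comm_length_SL2Z :: "int^2^2 \<Rightarrow> nat" where
  "comm_length_SL2Z g = (LEAST n. \<exists>ps :: ((int^2^2) \<times> (int^2^2)) list.
      length ps = n \<and> (\<forall>(X,Y) \<in> set ps. X \<in> SL2Z \<and> Y \<in> SL2Z) \<and>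
      mat_prod_list (map (\<lambda>(X,Y). commutator X Y) ps) = g)"

text \<open>Matrix power with respect to matrix multiplication (note: ^ on vec is componentwise).\<close>
primrec mpow :: "int^2^2 \<Rightarrow> nat \<Rightarrow> int^2^2" where
  "mpow A 0 = mat 1"
| "mpow A (Suc n) = A ** mpow A n"

end

theory Submission
  imports Defs
begin

text \<open>
  If \<open>[X,Y] = N\<close> with \<open>N = (1 b; 0 1)\<close> and \<open>b \<noteq> 0\<close>, then \<open>N Y = X Y X\<^sup>-\<^sup>1\<close> and
  \<open>X\<^sup>-\<^sup>1 N = Y X\<^sup>-\<^sup>1 Y\<^sup>-\<^sup>1\<close> are conjugates of \<open>Y\<close> and \<open>X\<^sup>-\<^sup>1\<close>; comparing traces forces the
  lower left entries of \<open>X\<close> and \<open>Y\<close> to vanish. Upper triangular matrices in \<open>SL(2,\<int>)\<close>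
  are \<open>\<plusminus>\<close> unipotent, hence commute, so \<open>[X,Y] = 1 \<noteq> N\<close>.
\<close>

lemma mat2_nth [simp]:
  "mat2 a b c d $ 1 $ 1 = a" "mat2 a b c d $ 1 $ 2 = b"
  "mat2 a b c d $ 2 $ 1 = c" "mat2 a b c d $ 2 $ 2 = d"
  by (simp_all add: mat2_def)

lemma mat2_cases:
  obtains a b c d where "(A::int^2^2) = mat2 a b c d"
proof
  show "A = mat2 (A$1$1) (A$1$2) (A$2$1) (A$2$2)"
    by (simp add: vec_eq_iff forall_2)
qed

lemma mat2_eq_iff [simp]:
  "mat2 a b c d = mat2 a' b' c' d' \<longleftrightarrow> a = a' \<and> b = b' \<and> c = c' \<and> d = d'"
  by (metis mat2_nth)

lemma mat2_mult [simp]: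
  "mat2 a b c d ** mat2 e f g h = mat2 (a*e + b*g) (a*f + b*h) (c*e + d*g) (c*f + d*h)"
  by (simp add: vec_eq_iff forall_2 matrix_matrix_mult_def sum_2)

lemma mat_1_eq_mat2: "(mat 1 :: int^2^2) = mat2 1 0 0 1"
  by (simp add: vec_eq_iff forall_2 mat_def)

lemma det_mat2 [simp]: "det (mat2 a b c d) = a * d - b * c"
  by (simp add: det_2)

lemma trace_mat2 [simp]: "trace (mat2 a b c d) = a + d"
  by (simp add: trace_def sum_2)

lemma matrix_inv_mat2:
  assumes "a * d - b * c = 1"
  shows "matrix_inv (mat2 a b c d) = mat2 d (-b) (-c) a"
proof -
  let ?A = "mat2 a b c d" and ?B = "mat2 d (-b) (-c) a"
  have inverse: "?A ** ?B = mat 1" "?B ** ?A = mat 1"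
    using assms by (simp_all add: mat_1_eq_mat2 algebra_simps)
  then have "matrix_inv ?A ** ?A = mat 1"
    unfolding matrix_inv_def by (metis (mono_tags, lifting) someI)
  then have "matrix_inv ?A ** ?A ** ?B = ?B"
    by simp
  then show ?thesis
    using inverse by (metis matrix_mul_assoc matrix_mul_rid)
qed

lemma matrix_inv_SL2Z:
  assumes "(X::int^2^2) \<in> SL2Z"
  shows "X ** matrix_inv X = mat 1" "matrix_inv X ** X = mat 1"
proof -
  obtain a b c d where X: "X = mat2 a b c d"
    by (rule mat2_cases)
  with assms have "a * d - b * c = 1"
    by (simp add: SL2Z_def)
  then show "X ** matrix_inv X = mat 1" "matrix_inv X ** X = mat 1"
    unfolding X by (simp_all add: matrix_inv_mat2 mat_1_eq_mat2 algebra_simps)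
qed

lemma trace_conjugate:
  fixes A P Q :: "'a::comm_semiring_1^'n^'n"
  assumes "Q ** P = mat 1"
  shows "trace (P ** A ** Q) = trace A"
  by (metis assms matrix_mul_assoc matrix_mul_lid trace_mul_sym)

lemma trace_unipotent_mult:
  "trace (mat2 1 b 0 1 ** A) = trace A + b * A$2$1"
  by (cases A rule: mat2_cases) simp

lemma commutator_eq_unipotent_lower_left:
  assumes X: "X \<in> SL2Z" and Y: "Y \<in> SL2Z"
    and comm: "commutator X Y = mat2 1 b 0 1" and "b \<noteq> 0"
  shows "X$2$1 = 0" "Y$2$1 = 0"
proof -
  define N where "N = mat2 1 b 0 1"
  note invX = matrix_inv_SL2Z[OF X] and invY = matrix_inv_SL2Z[OF Y]
  have "N ** Y = (X ** Y ** matrix_inv X ** matrix_inv Y) ** Y"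
    using comm by (simp add: N_def commutator_def)
  also have "\<dots> = X ** Y ** matrix_inv X ** (matrix_inv Y ** Y)"
    by (simp add: matrix_mul_assoc)
  finally have "N ** Y = X ** Y ** matrix_inv X"
    using invY by simp
  then have "trace (N ** Y) = trace Y"
    using trace_conjugate[OF invX(2)] by simp
  then show "Y$2$1 = 0"
    using \<open>b \<noteq> 0\<close> by (simp add: N_def trace_unipotent_mult)
  have "matrix_inv X ** N = matrix_inv X ** (X ** Y ** matrix_inv X ** matrix_inv Y)"
    using comm by (simp add: N_def commutator_def)
  also have "\<dots> = (matrix_inv X ** X) ** Y ** matrix_inv X ** matrix_inv Y"
    by (simp add: matrix_mul_assoc)
  finally have "matrix_inv X ** N = Y ** matrix_inv X ** matrix_inv Y"
    using invX by simp
  then have "trace (N ** matrix_inv X) = trace (matrix_inv X)"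
    using trace_mul_sym[of N] trace_conjugate[OF invY(2)] by simp
  then have "(matrix_inv X)$2$1 = 0"
    using \<open>b \<noteq> 0\<close> by (simp add: N_def trace_unipotent_mult)
  moreover obtain p q r s where "X = mat2 p q r s"
    by (rule mat2_cases)
  moreover from this X have "p * s - q * r = 1"
    by (simp add: SL2Z_def)
  ultimately show "X$2$1 = 0"
    by (simp add: matrix_inv_mat2)
qed

lemma commutator_upper_triangular_eq_1:
  assumes "p * s = (1::int)" "a * d = (1::int)"
  shows "commutator (mat2 p q 0 s) (mat2 a b 0 d) = mat 1"
proof -
  have "(p = 1 \<and> s = 1 \<or> p = -1 \<and> s = -1) \<and> (a = 1 \<and> d = 1 \<or> a = -1 \<and> d = -1)"
    using assms zmult_eq_1_iff by blast
  then show ?thesis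
    by (elim conjE disjE) (simp_all add: commutator_def matrix_inv_mat2 mat_1_eq_mat2)
qed

theorem unipotent_not_commutator_SL2Z:
  assumes "b \<noteq> 0"
  shows "\<not> (\<exists>X \<in> SL2Z. \<exists>Y \<in> SL2Z. commutator X Y = mat2 1 b 0 1)"
proof
  assume "\<exists>X \<in> SL2Z. \<exists>Y \<in> SL2Z. commutator X Y = mat2 1 b 0 1"
  then obtain X Y where X: "X \<in> SL2Z" and Y: "Y \<in> SL2Z" and comm: "commutator X Y = mat2 1 b 0 1"
    by blast
  obtain p q r s where X_eq: "X = mat2 p q r s"
    by (rule mat2_cases)
  obtain a b' c d where Y_eq: "Y = mat2 a b' c d"
    by (rule mat2_cases)
  have "r = 0" "c = 0"
    using commutator_eq_unipotent_lower_left[OF X Y comm \<open>b \<noteq> 0\<close>] X_eq Y_eq by simp_all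
  with X Y have "p * s = 1" "a * d = 1"
    unfolding X_eq Y_eq by (simp_all add: SL2Z_def)
  with \<open>r = 0\<close> \<open>c = 0\<close> have "commutator X Y = mat 1"
    unfolding X_eq Y_eq by (simp add: commutator_upper_triangular_eq_1)
  with comm \<open>b \<noteq> 0\<close> show False
    by (simp add: mat_1_eq_mat2)
qed

lemma comm_length_SL2Z_eq_2:
  assumes "g \<noteq> mat 1"
    and not_comm: "\<not> (\<exists>X \<in> SL2Z. \<exists>Y \<in> SL2Z. commutator X Y = g)"
    and "X \<in> SL2Z" "Y \<in> SL2Z" "X' \<in> SL2Z" "Y' \<in> SL2Z"
    and "commutator X Y ** commutator X' Y' = g"
  shows "comm_length_SL2Z g = 2"
  unfolding comm_length_SL2Z_def
proof (rule Least_equality)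
  show "\<exists>ps. length ps = 2 \<and> (\<forall>(X, Y) \<in> set ps. X \<in> SL2Z \<and> Y \<in> SL2Z) \<and>
      mat_prod_list (map (\<lambda>(X, Y). commutator X Y) ps) = g"
    by (rule exI[of _ "[(X, Y), (X', Y')]"]) (use assms in \<open>simp add: mat_prod_list_def\<close>)
next
  fix n
  assume "\<exists>ps. length ps = n \<and> (\<forall>(X, Y) \<in> set ps. X \<in> SL2Z \<and> Y \<in> SL2Z) \<and>
      mat_prod_list (map (\<lambda>(X, Y). commutator X Y) ps) = g"
  then obtain ps where "length ps = n" and ps_SL2Z: "\<forall>(X, Y) \<in> set ps. X \<in> SL2Z \<and> Y \<in> SL2Z"
    and ps_prod: "mat_prod_list (map (\<lambda>(X, Y). commutator X Y) ps) = g"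
    by blast
  show "2 \<le> n"
  proof (rule ccontr)
    assume "\<not> 2 \<le> n"
    with \<open>length ps = n\<close> consider "ps = []" | Z W where "ps = [(Z, W)]"
      by (metis One_nat_def length_0_conv length_Suc_conv less_2_cases not_le surj_pair)
    then show False
    proof cases
      case 1
      with ps_prod \<open>g \<noteq> mat 1\<close> show False
        by (simp add: mat_prod_list_def)
    next
      case 2
      with ps_SL2Z ps_prod not_comm show False
        by (simp add: mat_prod_list_def)
    qed
  qed
qed

lemma mpow_unipotent: "mpow (mat2 1 b 0 1) n = mat2 1 (int n * b) 0 1"
  by (induction n) (simp_all add: mat_1_eq_mat2 algebra_simps)

lemma mpow_2: "mpow A 2 = A ** A"
  by (simp add: numeral_eq_Suc)

theorem mainTheorem9:
  shows "mat2 1 1 1 2 \<in> SL2Z \<and> mat2 3 1 (-1) 0 \<in> SL2Z \<and> mat2 1 1 0 1 \<in> SL2Z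
       \<and> mpow (mat2 1 1 0 1) 12 = mat2 1 12 0 1
       \<and> mat2 1 12 0 1 = mpow (commutator (mat2 1 1 1 2) (mat2 3 1 (-1) 0)) 2
       \<and> \<not> (\<exists>X \<in> SL2Z. \<exists>Y \<in> SL2Z. commutator X Y = mpow (mat2 1 1 0 1) 12)
       \<and> comm_length_SL2Z (mpow (mat2 1 1 0 1) 12) = 2"
proof -
  let ?A = "mat2 1 1 1 2" and ?B = "mat2 3 1 (-1) 0"
  have SL2Z: "?A \<in> SL2Z" "?B \<in> SL2Z" "mat2 1 1 0 1 \<in> SL2Z"
    by (simp_all add: SL2Z_def)
  have T12: "mpow (mat2 1 1 0 1) 12 = mat2 1 12 0 1"
    by (simp add: mpow_unipotent)
  have square: "commutator ?A ?B ** commutator ?A ?B = mat2 1 12 0 1"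
    by (simp add: commutator_def matrix_inv_mat2)
  have not_comm: "\<not> (\<exists>X \<in> SL2Z. \<exists>Y \<in> SL2Z. commutator X Y = mat2 1 12 0 1)"
    by (rule unipotent_not_commutator_SL2Z) simp
  have "comm_length_SL2Z (mat2 1 12 0 1) = 2"
    by (rule comm_length_SL2Z_eq_2[OF _ not_comm SL2Z(1,2) SL2Z(1,2) square])
      (simp add: mat_1_eq_mat2)
  with SL2Z T12 square not_comm show ?thesis
    by (simp add: mpow_2)
qed

end
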